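(* Let $L$ be a positive integer and let $(\mathbf{F},\mathbf{G})$ be an eigencomplementary pair of matrices $\mathbf{F},\mathbf{G}\in\mathbb{R}^{L\times L}$ which are both singular. If $\mathbf{u},\mathbf{w}\in\mathbb{R}^L$ satisfy $\mathbf{G}\mathbf{u}=\mathbf{F}\mathbf{w}$, then $\mathbf{u}^\top\mathbf{w}=0$.
   Context: A pair $(\mathbf{F},\mathbf{G})$ of real symmetric $L\times L$ matrices is called eigencomplementary if $\mathbf{F}$ is negative semi-definite, $\mathbf{G}$ is positive semi-definite, $\mathbf{F}$ and $\mathbf{G}$ have a common basis of eigenvectors of $\mathbb{R}^L$, and, in the case that $\mathbf{F}$ and $\mathbf{G}$ are both singular, additionally $\bigoplus_{\xi\in\sigma(\mathbf{F}),\,\xi<0}\operatorname{Eig}_{\mathbf{F}}(\xi)=\operatorname{Eig}_{\mathbf{G}}(0)$, where $\sigma(\cdot)$ denotes the spectrum and $\operatorname{Eig}_{\mathbf{M}}(\xi)$ the eigenspace of $\mathbf{M}$ for the eigenvalue $\xi$. *)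

theory Defs
  imports "HOL-Analysis.Analysis"
begin

text \<open>Real L x L matrices are rendered as real^'n^'n with L = CARD('n).\<close>

definition symmetric_matrix :: "real^'n^'n \<Rightarrow> bool" where
  "symmetric_matrix M \<longleftrightarrow> transpose M = M"

definition pos_semidef :: "real^'n^'n \<Rightarrow> bool" where
  "pos_semidef M \<longleftrightarrow> symmetric_matrix M \<and> (\<forall>x. 0 \<le> x \<bullet> (M *v x))"

definition neg_semidef :: "real^'n^'n \<Rightarrow> bool" where
  "neg_semidef M \<longleftrightarrow> symmetric_matrix M \<and> (\<forall>x. x \<bullet> (M *v x) \<le> 0)"

definition eigenspace :: "real^'n^'n \<Rightarrow> real \<Rightarrow> (real^'n) set" where
  "eigenspace M \<xi> = {v. M *v v = \<xi> *\<^sub>R v}"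

definition matrix_spectrum :: "real^'n^'n \<Rightarrow> real set" where
  "matrix_spectrum M = {\<xi>. \<exists>v. v \<noteq> 0 \<and> M *v v = \<xi> *\<^sub>R v}"

definition is_eigenvector :: "real^'n^'n \<Rightarrow> real^'n \<Rightarrow> bool" where
  "is_eigenvector M v \<longleftrightarrow> v \<noteq> 0 \<and> (\<exists>\<xi>. M *v v = \<xi> *\<^sub>R v)"

definition common_eigenbasis :: "real^'n^'n \<Rightarrow> real^'n^'n \<Rightarrow> bool" where
  "common_eigenbasis F G \<longleftrightarrow>
     (\<exists>B. independent B \<and> span B = UNIV \<and>
          (\<forall>v\<in>B. is_eigenvector F v \<and> is_eigenvector G v))"

definition singular_matrix :: "real^'n^'n \<Rightarrow> bool" where
  "singular_matrix M \<longleftrightarrow> \<not> invertible M"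

text \<open>The (internal) direct sum of the eigenspaces of F for negative eigenvalues is
  the span of their union (these eigenspaces are independent for symmetric F).\<close>
definition eigencomplementary :: "real^'n^'n \<Rightarrow> real^'n^'n \<Rightarrow> bool" where
  "eigencomplementary F G \<longleftrightarrow>
     symmetric_matrix F \<and> symmetric_matrix G \<and>
     neg_semidef F \<and> pos_semidef G \<and> common_eigenbasis F G \<and>
     ((singular_matrix F \<and> singular_matrix G) \<longrightarrow>
        span (\<Union>\<xi>\<in>{\<xi>\<in>matrix_spectrum F. \<xi> < 0}. eigenspace F \<xi>) = eigenspace G 0)"

end

theory Submission
  imports Defs
begin

text \<open>Every vector of the common eigenbasis lies in the kernel of \<open>F\<close> or, having a negative
  \<open>F\<close>-eigenvalue, in the kernel of \<open>G\<close>. By symmetry, \<open>G u = F w\<close> is therefore orthogonal to the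
  whole basis, so \<open>G u = F w = 0\<close>. Then \<open>u\<close> lies in the span of the negative eigenspaces of \<open>F\<close>,
  while \<open>w\<close> lies in the kernel of \<open>F\<close>, which is orthogonal to every eigenspace of \<open>F\<close> for a
  nonzero eigenvalue.\<close>

lemma symmetric_matrix_inner_swap:
  fixes M :: "real^'n^'n"
  assumes "symmetric_matrix M"
  shows "(M *v x) \<bullet> y = x \<bullet> (M *v y)"
proof -
  have "M *v x = x v* M"
    using assms unfolding symmetric_matrix_def by (metis transpose_matrix_vector)
  then show ?thesis by (simp add: dot_lmul_matrix)
qed

lemma symmetric_matrix_eigenspaces_orthogonal:
  fixes M :: "real^'n^'n"
  assumes "symmetric_matrix M" and "x \<in> eigenspace M \<xi>" and "y \<in> eigenspace M \<eta>"
    and "\<xi> \<noteq> \<eta>"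
  shows "x \<bullet> y = 0"
proof -
  have "\<xi> * (x \<bullet> y) = (M *v x) \<bullet> y"
    using assms(2) unfolding eigenspace_def by simp
  also have "\<dots> = x \<bullet> (M *v y)"
    using assms(1) by (rule symmetric_matrix_inner_swap)
  also have "\<dots> = \<eta> * (x \<bullet> y)"
    using assms(3) unfolding eigenspace_def by simp
  finally show ?thesis
    using assms(4) by simp
qed

lemma symmetric_matrix_span_eigenspaces_orthogonal_kernel:
  fixes M :: "real^'n^'n"
  assumes "symmetric_matrix M" and "0 \<notin> \<Lambda>"
    and "u \<in> span (\<Union>\<xi>\<in>\<Lambda>. eigenspace M \<xi>)" and "M *v w = 0"
  shows "u \<bullet> w = 0"
proof -
  have "w \<in> eigenspace M 0"
    using assms(4) unfolding eigenspace_def by simp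
  then have "orthogonal w x" if "x \<in> (\<Union>\<xi>\<in>\<Lambda>. eigenspace M \<xi>)" for x
    using that assms(1,2) symmetric_matrix_eigenspaces_orthogonal[of M w 0 x]
    unfolding orthogonal_def by fastforce
  then have "orthogonal w u"
    using assms(3) orthogonal_to_span by blast
  then show ?thesis
    by (simp add: orthogonal_def inner_commute)
qed

lemma orthogonal_to_spanning_set_eq_0:
  fixes z :: "'a::real_inner"
  assumes "span S = UNIV" and "\<And>v. v \<in> S \<Longrightarrow> z \<bullet> v = 0"
  shows "z = 0"
proof -
  have "orthogonal z z"
    using assms orthogonal_to_span[of z S z] unfolding orthogonal_def by blast
  then show ?thesis
    by (simp add: orthogonal_self)
qed

lemma neg_semidef_eigenvalue_nonpos:
  fixes M :: "real^'n^'n"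
  assumes "neg_semidef M" and "v \<noteq> 0" and "M *v v = \<xi> *\<^sub>R v"
  shows "\<xi> \<le> 0"
proof -
  have "\<xi> * (v \<bullet> v) \<le> 0"
    using assms(1,3) unfolding neg_semidef_def by (metis inner_scaleR_right)
  moreover have "v \<bullet> v > 0"
    using assms(2) by simp
  ultimately show ?thesis
    by (simp add: mult_le_0_iff)
qed

lemma eigencomplementary_eigenvector_in_kernel:
  fixes F G :: "real^'n^'n"
  assumes "eigencomplementary F G" and "singular_matrix F" and "singular_matrix G"
    and "is_eigenvector F v"
  shows "F *v v = 0 \<or> G *v v = 0"
proof -
  obtain \<xi> where "v \<noteq> 0" and Fv: "F *v v = \<xi> *\<^sub>R v"
    using assms(4) unfolding is_eigenvector_def by blast
  moreover have "\<xi> \<le> 0"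
    using assms(1) calculation neg_semidef_eigenvalue_nonpos
    unfolding eigencomplementary_def by blast
  moreover have "G *v v = 0" if "\<xi> < 0"
  proof -
    have "\<xi> \<in> {\<xi>\<in>matrix_spectrum F. \<xi> < 0}" and "v \<in> eigenspace F \<xi>"
      using that \<open>v \<noteq> 0\<close> Fv unfolding matrix_spectrum_def eigenspace_def by auto
    then have "v \<in> span (\<Union>\<xi>\<in>{\<xi>\<in>matrix_spectrum F. \<xi> < 0}. eigenspace F \<xi>)"
      by (meson UN_I span_base)
    then show ?thesis
      using assms(1-3) unfolding eigencomplementary_def eigenspace_def by simp
  qed
  ultimately show ?thesis
    by force
qed

lemma eigencomplementary_common_image_eq_0:
  fixes F G :: "real^'n^'n"
  assumes "eigencomplementary F G" and "singular_matrix F" and "singular_matrix G"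
    and "G *v u = F *v w"
  shows "G *v u = 0"
proof -
  obtain B where B: "span B = UNIV" "\<And>v. v \<in> B \<Longrightarrow> is_eigenvector F v"
    using assms(1) unfolding eigencomplementary_def common_eigenbasis_def by blast
  have symm: "symmetric_matrix F" "symmetric_matrix G"
    using assms(1) unfolding eigencomplementary_def by auto
  have "(G *v u) \<bullet> v = 0" if "v \<in> B" for v
  proof -
    have "(G *v u) \<bullet> v = u \<bullet> (G *v v)" and "(G *v u) \<bullet> v = w \<bullet> (F *v v)"
      using symm symmetric_matrix_inner_swap assms(4) by (metis inner_commute)+
    then show ?thesis
      using eigencomplementary_eigenvector_in_kernel[OF assms(1-3) B(2)[OF that]] by auto
  qed
  then show ?thesis
    using B(1) orthogonal_to_spanning_set_eq_0 by blast
qed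

theorem lemma2p6:
  fixes F G :: "real^'n^'n" and u w :: "real^'n"
  assumes "eigencomplementary F G"
    and "singular_matrix F" and "singular_matrix G"
    and "G *v u = F *v w"
  shows "u \<bullet> w = 0"
proof -
  have Gu: "G *v u = 0"
    using assms by (rule eigencomplementary_common_image_eq_0)
  with assms(4) have Fw: "F *v w = 0"
    by simp
  from Gu have "u \<in> span (\<Union>\<xi>\<in>{\<xi>\<in>matrix_spectrum F. \<xi> < 0}. eigenspace F \<xi>)"
    using assms(1-3) unfolding eigencomplementary_def eigenspace_def by simp
  moreover have "symmetric_matrix F"
    using assms(1) unfolding eigencomplementary_def by simp
  ultimately show ?thesis
    using Fw by (intro symmetric_matrix_span_eigenspaces_orthogonal_kernel) auto
qed

end
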